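(* Let $\delta>0$ and let $g:[\ell,r]\to\mathbb{R}$ be a function with $|g(x)+\frac12x^2|\leq\frac14\delta^2$ for all $x\in[\ell,r]$. Let $x_0\in[\ell+3\delta,r-3\delta]$. Let $h_1$ be the concave majorant of $g$ on $[\ell,r]$ and $h_2$ the concave majorant of $g$ on $[x_0-3\delta,x_0+3\delta]$. Then $h_1(x_0)=h_2(x_0)$.
   Context: The concave majorant of $g$ on an interval $I$ is $h(x_0)=\inf\{ax_0+b: ax+b\geq g(x)\text{ for all }x\in I\}$ for $x_0\in I$. *)

theory Defs
  imports "HOL-Analysis.Analysis"
begin

definition concave_majorant :: "(real \<Rightarrow> real) \<Rightarrow> real set \<Rightarrow> real \<Rightarrow> real" where
  "concave_majorant g I x0 = Inf {a * x0 + b | a b. \<forall>x\<in>I. a * x + b \<ge> g x}"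

end

theory Submission
  imports Defs
begin

text \<open>Write \<open>g x = -x\<^sup>2/2 + e x\<close> with \<open>\<bar>e\<bar> \<le> \<delta>\<^sup>2/4\<close>. An affine majorant \<open>a x + b\<close> of \<open>g\<close> near \<open>x\<^sub>0\<close>
  exceeds \<open>-x\<^sup>2/2\<close> by a parabola \<open>p\<close> of curvature 1. If \<open>p(x\<^sub>0) \<ge> \<delta>\<^sup>2/4\<close>, the tangent line of
  \<open>-x\<^sup>2/2 + p(x\<^sub>0)\<close> at \<open>x\<^sub>0\<close> majorizes \<open>g\<close> everywhere and has the same value at \<open>x\<^sub>0\<close>.
  Otherwise \<open>p(x\<^sub>0) < \<delta>\<^sup>2/4\<close> while \<open>p \<ge> -\<delta>\<^sup>2/4\<close> on \<open>[x\<^sub>0 - 3\<delta>, x\<^sub>0 + 3\<delta>]\<close>; convexity then forces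
  \<open>p \<ge> \<delta>\<^sup>2/4\<close> outside that window, so the line itself majorizes \<open>g\<close> on all of \<open>[l, r]\<close>.
  Hence both infima range over the same set of values.\<close>

lemma concave_majorant_eq_if_majorants_extend:
  assumes "J \<subseteq> I"
    and "\<And>a b. \<forall>x\<in>J. g x \<le> a * x + b \<Longrightarrow>
           \<exists>a' b'. a' * x0 + b' = a * x0 + b \<and> (\<forall>x\<in>I. g x \<le> a' * x + b')"
  shows "concave_majorant g I x0 = concave_majorant g J x0"
proof -
  have "{a * x0 + b | a b. \<forall>x\<in>I. a * x + b \<ge> g x} = {a * x0 + b | a b. \<forall>x\<in>J. a * x + b \<ge> g x}"
  proof (intro subset_antisym subsetI)
    fix v assume "v \<in> {a * x0 + b | a b. \<forall>x\<in>J. a * x + b \<ge> g x}"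
    then obtain a b where "v = a * x0 + b" "\<forall>x\<in>J. g x \<le> a * x + b" by blast
    with assms(2) obtain a' b' where "v = a' * x0 + b'" "\<forall>x\<in>I. g x \<le> a' * x + b'"
      by metis
    then show "v \<in> {a * x0 + b | a b. \<forall>x\<in>I. a * x + b \<ge> g x}" by blast
  next
    fix v assume "v \<in> {a * x0 + b | a b. \<forall>x\<in>I. a * x + b \<ge> g x}"
    with assms(1) show "v \<in> {a * x0 + b | a b. \<forall>x\<in>J. a * x + b \<ge> g x}" by blast
  qed
  then show ?thesis unfolding concave_majorant_def by simp
qed

lemma parabola_ge_beyond_window:
  fixes \<alpha> \<beta> \<delta> t :: real
  assumes "\<delta> > 0" and "\<beta> < \<delta>\<^sup>2 / 4"
    and "\<beta> + \<alpha> * (2 * \<delta>) + (2 * \<delta>)\<^sup>2 / 2 \<ge> - (\<delta>\<^sup>2 / 4)"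
    and "\<beta> + \<alpha> * (3 * \<delta>) + (3 * \<delta>)\<^sup>2 / 2 \<ge> - (\<delta>\<^sup>2 / 4)"
    and "t \<ge> 3 * \<delta>"
  shows "\<beta> + \<alpha> * t + t\<^sup>2 / 2 \<ge> \<delta>\<^sup>2 / 4"
proof -
  \<comment> \<open>comparing the values at \<open>0\<close> and \<open>3\<delta>\<close> bounds the slope \<open>\<alpha>\<close> from below\<close>
  have "\<delta> * (3 * \<alpha> + 5 * \<delta>) > 0"
    using assms(2,4) by (simp add: algebra_simps power2_eq_square)
  then have "\<alpha> + 2 * \<delta> \<ge> 0"
    using \<open>\<delta> > 0\<close> by (simp add: zero_less_mult_iff)
  then have "t - 2 * \<delta> \<ge> \<delta>" and "\<alpha> + (t + 2 * \<delta>) / 2 \<ge> \<delta> / 2"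
    using assms(5) by (simp_all add: field_simps)
  then have "(t - 2 * \<delta>) * (\<alpha> + (t + 2 * \<delta>) / 2) \<ge> \<delta> * (\<delta> / 2)"
    using assms(1) by (intro mult_mono) auto
  moreover have "(\<beta> + \<alpha> * t + t\<^sup>2 / 2) - (\<beta> + \<alpha> * (2 * \<delta>) + (2 * \<delta>)\<^sup>2 / 2)
      = (t - 2 * \<delta>) * (\<alpha> + (t + 2 * \<delta>) / 2)"
    by (simp add: field_simps power2_eq_square)
  ultimately show ?thesis
    using assms(3) by (simp add: power2_eq_square)
qed

lemma parabola_ge_outside_window:
  fixes \<alpha> \<beta> \<delta> t :: real
  assumes "\<delta> > 0" and "\<beta> < \<delta>\<^sup>2 / 4"
    and window: "\<And>u. \<bar>u\<bar> \<le> 3 * \<delta> \<Longrightarrow> \<beta> + \<alpha> * u + u\<^sup>2 / 2 \<ge> - (\<delta>\<^sup>2 / 4)"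
    and "\<bar>t\<bar> \<ge> 3 * \<delta>"
  shows "\<beta> + \<alpha> * t + t\<^sup>2 / 2 \<ge> \<delta>\<^sup>2 / 4"
proof (cases "t \<ge> 0")
  case True
  then show ?thesis
    using assms(1,2,4) window[of "2 * \<delta>"] window[of "3 * \<delta>"]
    by (intro parabola_ge_beyond_window) auto
next
  case False
  have "\<beta> + (- \<alpha>) * (- t) + (- t)\<^sup>2 / 2 \<ge> \<delta>\<^sup>2 / 4"
    using False assms(1,2,4) window[of "- (2 * \<delta>)"] window[of "- (3 * \<delta>)"]
    by (intro parabola_ge_beyond_window) auto
  then show ?thesis by simp
qed

lemma affine_majorant_extends:
  fixes g :: "real \<Rightarrow> real" and I :: "real set" and \<delta> x0 a b :: real
  assumes "\<delta> > 0"
    and bound: "\<And>x. x \<in> I \<Longrightarrow> \<bar>g x + x\<^sup>2 / 2\<bar> \<le> \<delta>\<^sup>2 / 4"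
    and window_sub: "{x0 - 3 * \<delta> .. x0 + 3 * \<delta>} \<subseteq> I"
    and majorant: "\<forall>x\<in>{x0 - 3 * \<delta> .. x0 + 3 * \<delta>}. g x \<le> a * x + b"
  shows "\<exists>a' b'. a' * x0 + b' = a * x0 + b \<and> (\<forall>x\<in>I. g x \<le> a' * x + b')"
proof -
  define \<beta> where "\<beta> = a * x0 + b + x0\<^sup>2 / 2"
  have excess: "a * x + b + x\<^sup>2 / 2 = \<beta> + (a + x0) * (x - x0) + (x - x0)\<^sup>2 / 2" for x
    unfolding \<beta>_def by (simp add: field_simps power2_eq_square)
  show ?thesis
  proof (cases "\<beta> \<ge> \<delta>\<^sup>2 / 4")
    case True
    have "g x \<le> (- x0) * x + (\<beta> + x0\<^sup>2 / 2)" if "x \<in> I" for x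
    proof -
      have "(- x0) * x + (\<beta> + x0\<^sup>2 / 2) + x\<^sup>2 / 2 = \<beta> + (x - x0)\<^sup>2 / 2"
        by (simp add: field_simps power2_eq_square)
      moreover have "g x + x\<^sup>2 / 2 \<le> \<delta>\<^sup>2 / 4"
        using bound[OF that] by (rule abs_le_D1)
      moreover have "0 \<le> (x - x0)\<^sup>2 / 2" by simp
      ultimately show ?thesis using True by linarith
    qed
    moreover have "(- x0) * x0 + (\<beta> + x0\<^sup>2 / 2) = a * x0 + b"
      unfolding \<beta>_def by (simp add: power2_eq_square)
    ultimately show ?thesis by blast
  next
    case False
    have window: "\<beta> + (a + x0) * u + u\<^sup>2 / 2 \<ge> - (\<delta>\<^sup>2 / 4)" if "\<bar>u\<bar> \<le> 3 * \<delta>" for u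
    proof -
      have "x0 + u \<in> {x0 - 3 * \<delta> .. x0 + 3 * \<delta>}" using that by auto
      then have "g (x0 + u) \<le> a * (x0 + u) + b"
        and "- (g (x0 + u) + (x0 + u)\<^sup>2 / 2) \<le> \<delta>\<^sup>2 / 4"
        using majorant bound window_sub abs_le_D2 by blast+
      then show ?thesis using excess[of "x0 + u"] by simp
    qed
    have "g x \<le> a * x + b" if "x \<in> I" for x
    proof (cases "x \<in> {x0 - 3 * \<delta> .. x0 + 3 * \<delta>}")
      case True
      then show ?thesis using majorant by blast
    next
      case outside: False
      have "\<beta> + (a + x0) * (x - x0) + (x - x0)\<^sup>2 / 2 \<ge> \<delta>\<^sup>2 / 4"
        using False outside \<open>\<delta> > 0\<close> window
        by (intro parabola_ge_outside_window) auto
      then show ?thesis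
        using bound[OF that] excess[of x] by linarith
    qed
    then show ?thesis by blast
  qed
qed

theorem mainTheorem15:
  fixes g :: "real \<Rightarrow> real" and l r \<delta> x0 :: real
  assumes "\<delta> > 0"
    and "\<And>x. x \<in> {l..r} \<Longrightarrow> \<bar>g x + x\<^sup>2 / 2\<bar> \<le> \<delta>\<^sup>2 / 4"
    and "x0 \<in> {l + 3 * \<delta> .. r - 3 * \<delta>}"
  shows "concave_majorant g {l..r} x0 = concave_majorant g {x0 - 3 * \<delta> .. x0 + 3 * \<delta>} x0"
proof -
  have window_sub: "{x0 - 3 * \<delta> .. x0 + 3 * \<delta>} \<subseteq> {l..r}"
    using assms(3) by auto
  show ?thesis
    using window_sub affine_majorant_extends[OF assms(1,2) window_sub]
    by (rule concave_majorant_eq_if_majorants_extend)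
qed

end
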